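(* Let $(X,d)$ be a metric vector space (with translation-invariant metric $d$) such that $\dim X<\infty$. Let $A_0\subseteq A_1\subseteq A_2\subseteq\cdots\subseteq X$ be a nested sequence of subsets of $X$ satisfying: (A1) there is a map $K:\mathbb{N}\to\mathbb{N}$ with $K(n)\ge n$ and $A_n+A_n\subseteq A_{K(n)}$ for all $n\in\mathbb{N}$; (A2) $\lambda A_n\subseteq A_n$ for all $n\in\mathbb{N}$ and all scalars $\lambda$; (A3) $\bigcup_{n\in\mathbb{N}}A_n$ is dense in $X$. Then there exists $N\in\mathbb{N}$ such that $A_N=X$.
   Context: For subsets $A,B$ of a vector space and a scalar $\lambda$, $A+B=\{a+b:a\in A,b\in B\}$ and $\lambda A=\{\lambda a:a\in A\}$. *)

theory Defs
  imports "HOL-Analysis.Analysis"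
begin

definition metric_vector_space :: "'a::{real_vector, metric_space} itself \<Rightarrow> bool" where
  "metric_vector_space _ \<longleftrightarrow>
     (\<forall>x y z::'a. dist (x + z) (y + z) = dist x y) \<and>
     continuous_on UNIV (\<lambda>p::'a \<times> 'a. fst p + snd p) \<and>
     continuous_on UNIV (\<lambda>p::real \<times> 'a. fst p *\<^sub>R snd p)"

end

theory Submission
  imports Defs
begin

text \<open>In a metric vector space the span of a finite set is closed: by induction on the set,
a limit of \<open>s\<^sub>k + t\<^sub>k a\<close> with \<open>s\<^sub>k\<close> in a closed span either has convergent coefficients
along a subsequence, or after dividing by \<open>t\<^sub>k\<close> exhibits \<open>a\<close> as a limit in that span.
Since \<open>X\<close> is finite-dimensional, a maximal independent subset \<open>C\<close> of the dense set
\<open>\<Union>n. A n\<close> is finite, so its span is closed and hence all of \<open>X\<close>. Being finite, \<open>C\<close>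
(together with \<open>0\<close>) lies in a single \<open>A n\<close>; by (A2) so do all multiples of its elements,
and by (A1) sums of \<open>card C\<close> of them lie in \<open>A ((K ^^ card C) n)\<close>, which is thus all of \<open>X\<close>.\<close>

lemma mvs_tendsto_add:
  fixes f g :: "'b \<Rightarrow> 'a::{real_vector, metric_space}"
  assumes mvs: "metric_vector_space TYPE('a)" and "(f \<longlongrightarrow> a) F" "(g \<longlongrightarrow> b) F"
  shows "((\<lambda>x. f x + g x) \<longlongrightarrow> a + b) F"
proof -
  have "continuous_on UNIV (\<lambda>p::'a \<times> 'a. fst p + snd p)"
    using mvs unfolding metric_vector_space_def by blast
  from continuous_on_tendsto_compose[OF this tendsto_Pair[OF assms(2,3)]] show ?thesis by simp
qed

lemma mvs_tendsto_scaleR: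
  fixes f :: "'b \<Rightarrow> real" and g :: "'b \<Rightarrow> 'a::{real_vector, metric_space}"
  assumes mvs: "metric_vector_space TYPE('a)" and "(f \<longlongrightarrow> a) F" "(g \<longlongrightarrow> b) F"
  shows "((\<lambda>x. f x *\<^sub>R g x) \<longlongrightarrow> a *\<^sub>R b) F"
proof -
  have "continuous_on UNIV (\<lambda>p::real \<times> 'a. fst p *\<^sub>R snd p)"
    using mvs unfolding metric_vector_space_def by blast
  from continuous_on_tendsto_compose[OF this tendsto_Pair[OF assms(2,3)]] show ?thesis by simp
qed

lemma closed_limit_convergent_coeff:
  fixes S :: "'a::{real_vector, metric_space} set"
  assumes mvs: "metric_vector_space TYPE('a)" and "closed S"
    and mem: "\<And>n. x n - t n *\<^sub>R a \<in> S"
    and x: "x \<longlonglongrightarrow> l" and t: "t \<longlonglongrightarrow> c"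
  shows "l - c *\<^sub>R a \<in> S"
proof -
  have "(\<lambda>n. x n + (- t n) *\<^sub>R a) \<longlonglongrightarrow> l + (- c) *\<^sub>R a"
    by (intro mvs_tendsto_add[OF mvs] mvs_tendsto_scaleR[OF mvs] x t tendsto_intros)
  moreover have "\<forall>n. x n + (- t n) *\<^sub>R a \<in> S"
    using mem by simp
  ultimately show ?thesis
    using \<open>closed S\<close> unfolding closed_sequential_limits by fastforce
qed

lemma closed_subspace_limit_divergent_coeff:
  fixes S :: "'a::{real_vector, metric_space} set"
  assumes mvs: "metric_vector_space TYPE('a)" and "closed S" "subspace S"
    and mem: "\<And>n. x n - t n *\<^sub>R a \<in> S"
    and x: "x \<longlonglongrightarrow> l" and t: "(\<lambda>n. inverse (t n)) \<longlonglongrightarrow> 0"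
    and t_nz: "\<forall>\<^sub>F n in sequentially. t n \<noteq> 0"
  shows "a \<in> S"
proof -
  have "(\<lambda>n. - (inverse (t n) * t n)) \<longlonglongrightarrow> -1"
    by (rule tendsto_eventually) (use t_nz in eventually_elim, simp)
  then have "(\<lambda>n. inverse (t n) *\<^sub>R x n + (- (inverse (t n) * t n)) *\<^sub>R a)
      \<longlonglongrightarrow> 0 *\<^sub>R l + (-1) *\<^sub>R a"
    by (intro mvs_tendsto_add[OF mvs] mvs_tendsto_scaleR[OF mvs] x t tendsto_const)
  moreover have "inverse (t n) *\<^sub>R x n + (- (inverse (t n) * t n)) *\<^sub>R a \<in> S" for n
    using subspace_scale[OF \<open>subspace S\<close> mem, of "inverse (t n)" n]
    by (simp add: algebra_simps)
  ultimately have "- a \<in> S"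
    using \<open>closed S\<close> unfolding closed_sequential_limits by fastforce
  then show ?thesis
    using subspace_neg[OF \<open>subspace S\<close>] by fastforce
qed

lemma closed_span_insert:
  fixes F :: "'a::{real_vector, metric_space} set"
  assumes mvs: "metric_vector_space TYPE('a)" and closed: "closed (span F)"
  shows "closed (span (insert a F))"
proof (cases "a \<in> span F")
  case True
  then show ?thesis using closed by (simp add: span_redundant)
next
  case False
  show ?thesis
    unfolding closed_sequential_limits
  proof (intro allI impI, elim conjE)
    fix x l assume "\<forall>n. x n \<in> span (insert a F)" and x: "x \<longlonglongrightarrow> l"
    then have "\<forall>n. \<exists>c. x n - c *\<^sub>R a \<in> span F"
      by (simp add: span_insert)
    then obtain t where t: "\<And>n. x n - t n *\<^sub>R a \<in> span F"
      by metis
    \<comment> \<open>Compress the coefficients into \<open>[-1, 1]\<close> to extract a convergent subsequence.\<close>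
    define \<phi> where "\<phi> n = t n / (1 + \<bar>t n\<bar>)" for n
    have "\<phi> n \<in> {-1..1}" for n
      unfolding \<phi>_def by (auto simp: divide_simps abs_if)
    then obtain p r where "p \<in> {-1..1}" "strict_mono r" and "(\<phi> \<circ> r) \<longlonglongrightarrow> p"
      using compact_Icc[of "-1::real" 1] unfolding compact_eq_seq_compact_metric seq_compact_def
      by metis
    then have p: "\<bar>p\<bar> \<le> 1" and \<phi>r: "(\<lambda>n. \<phi> (r n)) \<longlonglongrightarrow> p"
      by (auto simp: o_def)
    have xr: "(\<lambda>n. x (r n)) \<longlonglongrightarrow> l"
      using LIMSEQ_subseq_LIMSEQ[OF x \<open>strict_mono r\<close>] by (simp add: o_def)
    have one_minus: "1 - \<bar>\<phi> n\<bar> = 1 / (1 + \<bar>t n\<bar>)" for n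
      unfolding \<phi>_def by (simp add: abs_divide divide_simps)
    have "\<bar>p\<bar> \<noteq> 1"
    proof
      assume "\<bar>p\<bar> = 1"
      then have "p \<noteq> 0" by auto
      have "inverse (t n) = (1 - \<bar>\<phi> n\<bar>) / \<phi> n" for n
        unfolding one_minus unfolding \<phi>_def by (simp add: divide_simps)
      then have "(\<lambda>n. inverse (t (r n))) \<longlonglongrightarrow> (1 - \<bar>p\<bar>) / p"
        by (simp only:) (intro tendsto_intros \<phi>r \<open>p \<noteq> 0\<close>)
      moreover have "\<forall>\<^sub>F n in sequentially. t (r n) \<noteq> 0"
        using tendsto_imp_eventually_ne[OF \<phi>r \<open>p \<noteq> 0\<close>] by eventually_elim (simp add: \<phi>_def)
      ultimately have "a \<in> span F"
        using closed_subspace_limit_divergent_coeff[OF mvs closed subspace_span t xr] \<open>\<bar>p\<bar> = 1\<close>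
        by simp
      with False show False ..
    qed
    with p have "1 - \<bar>p\<bar> \<noteq> 0" by auto
    moreover have "t n = \<phi> n / (1 - \<bar>\<phi> n\<bar>)" for n
      unfolding one_minus unfolding \<phi>_def by simp
    ultimately have "(\<lambda>n. t (r n)) \<longlonglongrightarrow> p / (1 - \<bar>p\<bar>)"
      by (simp only:) (intro tendsto_intros \<phi>r)
    then have "l - (p / (1 - \<bar>p\<bar>)) *\<^sub>R a \<in> span F"
      using closed_limit_convergent_coeff[OF mvs closed t xr] by blast
    then show "l \<in> span (insert a F)"
      by (auto simp: span_insert)
  qed
qed

lemma closed_span_finite:
  fixes S :: "'a::{real_vector, metric_space} set"
  assumes mvs: "metric_vector_space TYPE('a)" and "finite S"
  shows "closed (span S)"
  using \<open>finite S\<close> by induction (simp_all add: closed_span_insert[OF mvs])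

lemma dense_subset_contains_spanning_finite:
  fixes U :: "'a::{real_vector, metric_space} set"
  assumes mvs: "metric_vector_space TYPE('a)"
    and findim: "\<exists>B::'a set. finite B \<and> span B = UNIV"
    and dense: "closure U = UNIV"
  obtains C where "finite C" "C \<subseteq> U" "span C = UNIV"
proof -
  obtain B :: "'a set" where B: "finite B" "span B = UNIV" using findim by blast
  obtain C where C: "C \<subseteq> U" "independent C" "U \<subseteq> span C"
    by (rule maximal_independent_subset)
  have "finite C" using independent_span_bound[OF B(1) C(2)] B(2) by blast
  then have "closure U \<subseteq> span C"
    using closure_minimal[OF C(3) closed_span_finite[OF mvs]] by blast
  with dense have "span C = UNIV" by blast
  with \<open>finite C\<close> C(1) show thesis ..
qed

lemma incseq_finite_subset_UN:
  assumes "incseq A" "finite C" "C \<subseteq> (\<Union>n. A n)"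
  shows "\<exists>n. C \<subseteq> A n"
  using \<open>finite C\<close> \<open>C \<subseteq> (\<Union>n. A n)\<close>
proof induction
  case (insert c C)
  then obtain n m where "C \<subseteq> A n" "c \<in> A m" by auto
  then have "insert c C \<subseteq> A (max n m)"
    using incseqD[OF \<open>incseq A\<close>, of n "max n m"] incseqD[OF \<open>incseq A\<close>, of m "max n m"] by auto
  then show ?case ..
qed simp

lemma sum_scaleR_mem_iterated_sumset:
  fixes A :: "nat \<Rightarrow> 'a::real_vector set" and K :: "nat \<Rightarrow> nat"
  assumes "incseq A"
    and K_ge: "\<And>n. K n \<ge> n"
    and sums: "\<And>n. {a + b | a b. a \<in> A n \<and> b \<in> A n} \<subseteq> A (K n)"
    and scales: "\<And>n c. (\<lambda>x. c *\<^sub>R x) ` A n \<subseteq> A n"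
    and "0 \<in> A n" "finite F" "F \<subseteq> A n"
  shows "(\<Sum>v\<in>F. u v *\<^sub>R v) \<in> A ((K ^^ card F) n)"
  using \<open>finite F\<close> \<open>F \<subseteq> A n\<close>
proof induction
  case empty
  then show ?case using \<open>0 \<in> A n\<close> by simp
next
  case (insert x F)
  have "n \<le> (K ^^ k) n" for k
    by (induction k) (auto intro: order_trans[OF _ K_ge])
  then have "A n \<subseteq> A ((K ^^ card F) n)"
    using \<open>incseq A\<close> by (simp add: incseqD)
  moreover have "u x *\<^sub>R x \<in> A n"
    using insert.prems scales by blast
  ultimately have "u x *\<^sub>R x \<in> A ((K ^^ card F) n)"
    by blast
  moreover have "(\<Sum>v\<in>F. u v *\<^sub>R v) \<in> A ((K ^^ card F) n)"
    using insert by simp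
  ultimately have "u x *\<^sub>R x + (\<Sum>v\<in>F. u v *\<^sub>R v) \<in> A (K ((K ^^ card F) n))"
    using sums by blast
  then show ?case
    using insert by simp
qed

theorem mainTheorem1:
  fixes A :: "nat \<Rightarrow> 'a::{real_vector, metric_space} set"
    and K :: "nat \<Rightarrow> nat"
  assumes mvs: "metric_vector_space TYPE('a)"
    and findim: "\<exists>B::'a set. finite B \<and> span B = UNIV"
    and nested: "\<And>n. A n \<subseteq> A (Suc n)"
    and K_ge: "\<And>n. K n \<ge> n"
    and A1: "\<And>n. {a + b | a b. a \<in> A n \<and> b \<in> A n} \<subseteq> A (K n)"
    and A2: "\<And>n (c::real). (\<lambda>x. c *\<^sub>R x) ` A n \<subseteq> A n"
    and A3: "closure (\<Union>n. A n) = UNIV"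
  shows "\<exists>N. A N = UNIV"
proof -
  have inc: "incseq A" using nested by (rule incseq_SucI)
  obtain C where C: "finite C" "C \<subseteq> (\<Union>n. A n)" "span C = UNIV"
    using dense_subset_contains_spanning_finite[OF mvs findim A3] .
  have "(\<Union>n. A n) \<noteq> {}"
    using A3 by (metis closure_empty empty_not_UNIV)
  then obtain z m where "z \<in> A m" by blast
  then have "0 \<in> A m"
    using A2[of 0 m] by auto
  then obtain n where n: "insert 0 C \<subseteq> A n"
    using incseq_finite_subset_UN[OF inc, of "insert 0 C"] C by blast
  have "y \<in> A ((K ^^ card C) n)" for y
  proof -
    obtain u where "y = (\<Sum>v\<in>C. u v *\<^sub>R v)"
      using C(3) span_finite[OF C(1)] by blast
    then show ?thesis
      using sum_scaleR_mem_iterated_sumset[OF inc K_ge A1 A2 _ C(1)] n by auto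
  qed
  then show ?thesis
    by blast
qed

end
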